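(* Let $n\ge2$ and $\mathbf{a}=(a_1,\dots,a_n)\in\Delta^{(n)}$. Define $q_i=a_1+\cdots+a_i+(n-i)a_i$ for $1\le i\le n$ and $q_{n-1+i}=(i-1)a_i+a_i+\cdots+a_n$ for $1\le i\le n$ (these two definitions agree at $q_n=1$; and $q_1=na_1$, $q_{2n-1}=na_n$). Let $\mathbf{P}=(P_1,\dots,P_n)\colon[na_1,na_n]\to\mathbb{R}^n$ be the continuous map such that: (i) for $1\le i\le n-1$ and $q\in[q_i,q_{i+1}]$: $P_k(q)=a_k$ for $k\le i$, and $P_{i+1}(q)=\cdots=P_n(q)=a_i+(q-q_i)/(n-i)$; (ii) for $1\le i\le n-1$ and $q\in[q_{n-1+i},q_{n+i}]$: $P_1(q)=\cdots=P_i(q)=a_i+(q-q_{n-1+i})/i$, and $P_k(q)=a_k$ for $k\ge i+1$. Then $\mathbf{P}$ is a generalized $n$-system on $[na_1,na_n]$ and, for each $j=1,\dots,n-1$, \[ \inf_{q\in[na_1,na_n]}\psi_j\big(q^{-1}\mathbf{P}(q)\big)=\psi_j(\mathbf{a})\quad\text{and}\quad \sup_{q\in[na_1,na_n]}\psi_j\big(q^{-1}\mathbf{P}(q)\big)=\frac{j}{n}. \]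
   Context: $\Delta^{(n)}=\{(a_1,\dots,a_n)\in\mathbb{R}^n: 0<a_1<\cdots<a_n,\ a_1+\cdots+a_n=1\}$ and $\bar\Delta^{(n)}=\{(a_1,\dots,a_n)\in\mathbb{R}^n: 0\le a_1\le\cdots\le a_n,\ a_1+\cdots+a_n=1\}$. For $j=1,\dots,n$, $\psi_j\colon\bar\Delta^{(n)}\to\mathbb{R}$ is $\psi_j(a_1,\dots,a_n)=a_1+\cdots+a_j$. A map $\mathbf{P}\colon I\to\mathbb{R}^n$ on an interval $I\subseteq[0,\infty)$ with non-empty interior is continuous piecewise linear if it is continuous, the set of points of $I$ where it is not differentiable (including endpoints of $I$ lying in $I$) is discrete in $I$, and its derivative is locally constant off that set. A generalized $n$-system on $I$ is a continuous piecewise linear map $\mathbf{P}=(P_1,\dots,P_n)\colon I\to\mathbb{R}^n$ such that: (G1) for each $q\in I$, $0\le P_1(q)\le\cdots\le P_n(q)$ and $P_1(q)+\cdots+P_n(q)=q$; (G2) on each non-empty open subinterval $H$ of $I$ on which $\mathbf{P}$ is differentiable, there are integers $1\le \underline{r}\le\overline{r}\le n$ such that $P_{\underline r},\dots,P_{\overline r}$ coincide on $H$ and have slope $1/(\overline r-\underline r+1)$, while every other $P_j$ is constant on $H$; (G3) if $q$ is an interior point of $I$ where $\mathbf{P}$ is not differentiable, and $\underline r,\overline r,\underline s,\overline s$ are the integers with $P_j'(q^-)=1/(\overline r-\underline r+1)$ for $\underline r\le j\le\overline r$ and $P_j'(q^+)=1/(\overline s-\underline s+1)$ for $\underline s\le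 j\le \overline s$, and if $\underline r<\overline s$, then $P_{\underline r}(q)=\cdots=P_{\overline s}(q)$. *)

theory Defs
  imports "HOL-Analysis.Analysis"
begin

text \<open>Points of R^n are represented as functions nat => real, with coordinates
  indexed by 1..n (values outside 1..n are irrelevant).\<close>

definition open_simplex :: "nat \<Rightarrow> (nat \<Rightarrow> real) \<Rightarrow> bool" where
  "open_simplex n a \<longleftrightarrow>
     0 < a 1 \<and> (\<forall>i\<in>{1..<n}. a i < a (Suc i)) \<and> (\<Sum>i=1..n. a i) = 1"

definition psi :: "nat \<Rightarrow> (nat \<Rightarrow> real) \<Rightarrow> real" where
  "psi j x = (\<Sum>i=1..j. x i)"

definition nondiff_set :: "nat \<Rightarrow> real set \<Rightarrow> (real \<Rightarrow> nat \<Rightarrow> real) \<Rightarrow> real set" where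
  "nondiff_set n I P =
     {q\<in>I. q \<notin> interior I \<or> \<not> (\<forall>j\<in>{1..n}. (\<lambda>t. P t j) differentiable (at q))}"

definition cont_piecewise_linear :: "nat \<Rightarrow> real set \<Rightarrow> (real \<Rightarrow> nat \<Rightarrow> real) \<Rightarrow> bool" where
  "cont_piecewise_linear n I P \<longleftrightarrow>
     (\<forall>j\<in>{1..n}. continuous_on I (\<lambda>t. P t j)) \<and>
     (\<forall>x\<in>I. \<exists>e>0. \<forall>y\<in>nondiff_set n I P. dist y x < e \<longrightarrow> y = x) \<and>
     (\<forall>x\<in>I - nondiff_set n I P. \<exists>e>0. \<forall>y\<in>I - nondiff_set n I P. dist y x < e \<longrightarrow>
        (\<forall>j\<in>{1..n}. deriv (\<lambda>t. P t j) y = deriv (\<lambda>t. P t j) x))"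

definition gen_system :: "nat \<Rightarrow> real set \<Rightarrow> (real \<Rightarrow> nat \<Rightarrow> real) \<Rightarrow> bool" where
  "gen_system n I P \<longleftrightarrow>
     is_interval I \<and> I \<subseteq> {0..} \<and> interior I \<noteq> {} \<and>
     cont_piecewise_linear n I P \<and>
     \<comment> \<open>(G1)\<close>
     (\<forall>q\<in>I. 0 \<le> P q 1 \<and> (\<forall>j\<in>{1..<n}. P q j \<le> P q (Suc j)) \<and> (\<Sum>j=1..n. P q j) = q) \<and>
     \<comment> \<open>(G2)\<close>
     (\<forall>H. is_interval H \<and> open H \<and> H \<noteq> {} \<and> H \<subseteq> I \<and>
          (\<forall>t\<in>H. \<forall>j\<in>{1..n}. (\<lambda>t. P t j) differentiable (at t)) \<longrightarrow>
        (\<exists>r1 r2. 1 \<le> r1 \<and> r1 \<le> r2 \<and> r2 \<le> n \<and>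
           (\<forall>t\<in>H. \<forall>j\<in>{r1..r2}. P t j = P t r1 \<and>
               ((\<lambda>t. P t j) has_real_derivative 1 / real (r2 - r1 + 1)) (at t)) \<and>
           (\<forall>j\<in>{1..n} - {r1..r2}. \<forall>t\<in>H. \<forall>u\<in>H. P t j = P u j))) \<and>
     \<comment> \<open>(G3)\<close>
     (\<forall>q\<in>interior I. q \<in> nondiff_set n I P \<longrightarrow>
        (\<forall>r1 r2 s1 s2. 1 \<le> r1 \<and> r1 \<le> r2 \<and> r2 \<le> n \<and> 1 \<le> s1 \<and> s1 \<le> s2 \<and> s2 \<le> n \<and>
           (\<forall>j\<in>{r1..r2}. ((\<lambda>t. P t j) has_real_derivative 1 / real (r2 - r1 + 1)) (at q within {..q})) \<and>
           (\<forall>j\<in>{s1..s2}. ((\<lambda>t. P t j) has_real_derivative 1 / real (s2 - s1 + 1)) (at q within {q..})) \<and>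
           r1 < s2 \<longrightarrow> (\<forall>j\<in>{r1..s2}. P q j = P q r1)))"

end

theory Submission
  imports Defs
begin

text \<open>
  On each of its 2n - 2 segments [qq m, qq (m + 1)] the map P moves exactly one block of
  consecutive coordinates, with common slope, and the block changes at every breakpoint.
  Hence P is a generalized n-system whose points of non-differentiability are exactly the
  breakpoints, and condition (G3) there reduces to the coordinates of P (qq m) between the
  incoming and the outgoing block being equal.

  On the first half P q = (a_1, ..., a_i, x, ..., x) and on the second half
  P q = (y, ..., y, a_(i+1), ..., a_n), with x, y between a_i and a_(i+1). An elementary
  estimate shows that for such points psi_j (P q) is at least psi_j a times the total mass q,
  while for every nondecreasing point the mean of the first j coordinates is at most the mean
  of all n. Both bounds are attained: at q = 1 the point P q is a itself, and at q = n a_1 all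
  coordinates equal a_1.
\<close>

section \<open>Paths moving one block of coordinates at a time\<close>

lemma has_real_derivative_affine_within:
  fixes f :: "real \<Rightarrow> real"
  assumes "x \<in> {c..d}" and "\<And>q. q \<in> {c..d} \<Longrightarrow> f q = f c + s * (q - c)"
  shows "(f has_real_derivative s) (at x within {c..d})"
proof -
  have "((\<lambda>q. f c + s * (q - c)) has_real_derivative s) (at x within {c..d})"
    by (auto intro!: derivative_eq_intros)
  then show ?thesis
  proof (rule has_field_derivative_transform_within[where d=1])
    show "f c + s * (y - c) = f y" if "y \<in> {c..d}" for y
      by (rule assms(2)[OF that, symmetric])
  qed (use assms(1) in auto)
qed

lemma has_real_derivative_affine_at:
  fixes f :: "real \<Rightarrow> real"
  assumes "x \<in> {c<..<d}" and "\<And>q. q \<in> {c..d} \<Longrightarrow> f q = f c + s * (q - c)"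
  shows "(f has_real_derivative s) (at x)"
proof -
  have "((\<lambda>q. f c + s * (q - c)) has_real_derivative s) (at x)"
    by (auto intro!: derivative_eq_intros)
  then show ?thesis
  proof (rule has_field_derivative_transform_within_open[where S="{c<..<d}"])
    show "f c + s * (y - c) = f y" if "y \<in> {c<..<d}" for y
      using that by (intro assms(2)[symmetric]) auto
  qed (use assms(1) in auto)
qed

lemma has_real_derivative_unique_within_closed_interval:
  fixes f :: "real \<Rightarrow> real"
  assumes "c < d" "x \<in> {c..d}"
    and "(f has_real_derivative D1) (at x within {c..d})"
    and "(f has_real_derivative D2) (at x within {c..d})"
  shows "D1 = D2"
  using vector_derivative_unique_within_closed_interval[of c d x f D1 D2] assms
  by (simp add: has_real_derivative_iff_has_vector_derivative)

definition block_slope :: "nat \<Rightarrow> nat \<Rightarrow> nat \<Rightarrow> real" where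
  "block_slope l h k = (if k \<in> {l..h} then 1 / real (h - l + 1) else 0)"

lemma block_slope_eq_0_iff: "block_slope l h k = 0 \<longleftrightarrow> k \<notin> {l..h}"
  by (simp add: block_slope_def)

lemma block_slope_differs:
  assumes "l \<le> h" "l' \<le> h'" "(l, h) \<noteq> (l', h')"
  obtains k where "k \<in> {min l l'..max h h'}" "block_slope l h k \<noteq> block_slope l' h' k"
proof -
  have "{l..h} \<noteq> {l'..h'}" using assms by simp
  then obtain k where "k \<in> {l..h} \<longleftrightarrow> k \<notin> {l'..h'}" by blast
  then have "k \<in> {min l l'..max h h'}" "block_slope l h k \<noteq> block_slope l' h' k"
    by (auto simp: block_slope_def)
  then show thesis by (rule that)
qed

locale block_linear_path =
  fixes n N :: nat and Q :: "nat \<Rightarrow> real" and P :: "real \<Rightarrow> nat \<Rightarrow> real"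
    and lo hi :: "nat \<Rightarrow> nat"
  assumes N_ge_2: "2 \<le> N"
    and Q_less_Suc: "\<And>m. m \<in> {1..<N} \<Longrightarrow> Q m < Q (Suc m)"
    and block_bounds: "\<And>m. m \<in> {1..<N} \<Longrightarrow> 1 \<le> lo m \<and> lo m \<le> hi m \<and> hi m \<le> n"
    and affine_on_segment: "\<And>m q k. \<lbrakk>m \<in> {1..<N}; q \<in> {Q m..Q (Suc m)}; k \<in> {1..n}\<rbrakk> \<Longrightarrow>
      P q k = P (Q m) k + block_slope (lo m) (hi m) k * (q - Q m)"
    and block_changes: "\<And>m. m \<in> {2..<N} \<Longrightarrow> (lo (m - 1), hi (m - 1)) \<noteq> (lo m, hi m)"
    and block_level: "\<And>m k. \<lbrakk>m \<in> {1..<N}; k \<in> {lo m..hi m}\<rbrakk> \<Longrightarrow> P (Q m) k = P (Q m) (lo m)"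
    and junction_level: "\<And>m k. \<lbrakk>m \<in> {2..<N}; k \<in> {lo (m - 1)..hi m}\<rbrakk> \<Longrightarrow>
      P (Q m) k = P (Q m) (lo (m - 1))"
begin

lemma Q_strict_mono: "\<lbrakk>1 \<le> i; i < j; j \<le> N\<rbrakk> \<Longrightarrow> Q i < Q j"
  using lift_Suc_mono_less_ivl[of "{1..<N}" Q i j] Q_less_Suc by auto

lemma Q_mono: "\<lbrakk>1 \<le> i; i \<le> j; j \<le> N\<rbrakk> \<Longrightarrow> Q i \<le> Q j"
  using Q_strict_mono by (cases "i = j") (auto intro: less_imp_le)

lemma segment_containing:
  assumes "q \<in> {Q 1..Q N}"
  obtains m where "m \<in> {1..<N}" "q \<in> {Q m..Q (Suc m)}"
proof -
  define M where "M = {m \<in> {1..<N}. Q m \<le> q}"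
  define m where "m = Max M"
  have "1 \<in> M" using assms N_ge_2 unfolding M_def by auto
  then have "m \<in> M" unfolding m_def M_def by (intro Max_in) auto
  then have m: "m \<in> {1..<N}" "Q m \<le> q" unfolding M_def by auto
  have "q \<le> Q (Suc m)"
  proof (cases "Suc m < N")
    case True
    have "Suc m \<notin> M" using Max_ge[of M "Suc m"] unfolding m_def M_def by fastforce
    then show ?thesis using True m unfolding M_def by auto
  next
    case False
    then have "Suc m = N" using m by auto
    then show ?thesis using assms by auto
  qed
  then show thesis using that m by auto
qed

lemma open_segment_containing:
  assumes "q \<in> {Q 1..Q N}" "q \<notin> Q ` {1..N}"
  obtains m where "m \<in> {1..<N}" "q \<in> {Q m<..<Q (Suc m)}"
proof -
  obtain m where m: "m \<in> {1..<N}" "q \<in> {Q m..Q (Suc m)}"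
    using segment_containing[OF assms(1)] .
  have "q \<noteq> Q m" "q \<noteq> Q (Suc m)" using assms(2) m(1) by force+
  then show thesis using that m by auto
qed

lemma P_has_derivative_within_segment:
  assumes "m \<in> {1..<N}" "t \<in> {Q m..Q (Suc m)}" "k \<in> {1..n}"
  shows "((\<lambda>t. P t k) has_real_derivative block_slope (lo m) (hi m) k) (at t within {Q m..Q (Suc m)})"
  by (rule has_real_derivative_affine_within[OF assms(2)]) (rule affine_on_segment[OF assms(1) _ assms(3)])

lemma P_has_derivative_open_segment:
  assumes "m \<in> {1..<N}" "t \<in> {Q m<..<Q (Suc m)}" "k \<in> {1..n}"
  shows "((\<lambda>t. P t k) has_real_derivative block_slope (lo m) (hi m) k) (at t)"
  by (rule has_real_derivative_affine_at[OF assms(2)]) (rule affine_on_segment[OF assms(1) _ assms(3)])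

lemma segment_slope_unique:
  assumes "m \<in> {1..<N}" "t \<in> {Q m..Q (Suc m)}" "k \<in> {1..n}"
    and "((\<lambda>t. P t k) has_real_derivative D) (at t within {Q m..Q (Suc m)})"
  shows "D = block_slope (lo m) (hi m) k"
  by (rule has_real_derivative_unique_within_closed_interval[OF Q_less_Suc[OF assms(1)] assms(2,4)
        P_has_derivative_within_segment[OF assms(1-3)]])

lemma not_differentiable_at_breakpoint:
  assumes m: "m \<in> {2..<N}"
  shows "\<not> (\<forall>k\<in>{1..n}. (\<lambda>t. P t k) differentiable (at (Q m)))"
proof
  assume diff: "\<forall>k\<in>{1..n}. (\<lambda>t. P t k) differentiable (at (Q m))"
  have left: "m - 1 \<in> {1..<N}" "Suc (m - 1) = m" and right: "m \<in> {1..<N}" using m by auto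
  obtain k where k: "k \<in> {min (lo (m - 1)) (lo m)..max (hi (m - 1)) (hi m)}"
    and differs: "block_slope (lo (m - 1)) (hi (m - 1)) k \<noteq> block_slope (lo m) (hi m) k"
    using block_slope_differs block_bounds[OF left(1)] block_bounds[OF right] block_changes[OF m]
    by metis
  have kn: "k \<in> {1..n}" using k block_bounds[OF left(1)] block_bounds[OF right] by auto
  have D: "((\<lambda>t. P t k) has_real_derivative deriv (\<lambda>t. P t k) (Q m)) (at (Q m))"
    using diff kn DERIV_deriv_iff_real_differentiable by blast
  have "deriv (\<lambda>t. P t k) (Q m) = block_slope (lo (m - 1)) (hi (m - 1)) k"
    using segment_slope_unique[OF left(1) _ kn has_field_derivative_at_within[OF D]]
      Q_less_Suc[OF left(1)] left(2) by auto
  moreover have "deriv (\<lambda>t. P t k) (Q m) = block_slope (lo m) (hi m) k"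
    using segment_slope_unique[OF right _ kn has_field_derivative_at_within[OF D]]
      Q_less_Suc[OF right] by auto
  ultimately show False using differs by simp
qed

lemma nondiff_set_eq_breakpoints: "nondiff_set n {Q 1..Q N} P = Q ` {1..N}"
proof
  show "nondiff_set n {Q 1..Q N} P \<subseteq> Q ` {1..N}"
  proof
    fix q assume q: "q \<in> nondiff_set n {Q 1..Q N} P"
    show "q \<in> Q ` {1..N}"
    proof (rule ccontr)
      assume nq: "q \<notin> Q ` {1..N}"
      have qI: "q \<in> {Q 1..Q N}" using q unfolding nondiff_set_def by auto
      obtain m where m: "m \<in> {1..<N}" "q \<in> {Q m<..<Q (Suc m)}"
        using open_segment_containing[OF qI nq] .
      have "q \<noteq> Q 1" "q \<noteq> Q N" using nq N_ge_2 by force+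
      then have "q \<in> interior {Q 1..Q N}" using qI by auto
      moreover have "\<forall>k\<in>{1..n}. (\<lambda>t. P t k) differentiable (at q)"
        using P_has_derivative_open_segment[OF m] real_differentiable_def by blast
      ultimately show False using q unfolding nondiff_set_def by auto
    qed
  qed
  show "Q ` {1..N} \<subseteq> nondiff_set n {Q 1..Q N} P"
  proof
    fix q assume "q \<in> Q ` {1..N}"
    then obtain m where m: "m \<in> {1..N}" "q = Q m" by auto
    have qI: "q \<in> {Q 1..Q N}" using m Q_mono by auto
    show "q \<in> nondiff_set n {Q 1..Q N} P"
    proof (cases "m = 1 \<or> m = N")
      case True
      then have "q \<notin> interior {Q 1..Q N}" using m by auto
      then show ?thesis using qI unfolding nondiff_set_def by auto
    next
      case False
      then have "m \<in> {2..<N}" using m by auto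
      then show ?thesis
        using not_differentiable_at_breakpoint qI m unfolding nondiff_set_def by auto
    qed
  qed
qed

lemma differentiable_interval_in_open_segment:
  assumes H: "is_interval H" "H \<noteq> {}" "H \<subseteq> interior {Q 1..Q N}"
    and diff: "\<forall>t\<in>H. \<forall>k\<in>{1..n}. (\<lambda>t. P t k) differentiable (at t)"
  obtains m where "m \<in> {1..<N}" "H \<subseteq> {Q m<..<Q (Suc m)}"
proof -
  have no_breakpoint: "t \<notin> Q ` {1..N}" if "t \<in> H" for t
  proof
    assume "t \<in> Q ` {1..N}"
    then obtain m where m: "m \<in> {1..N}" "t = Q m" by auto
    then have "m \<noteq> 1" "m \<noteq> N" using H(3) \<open>t \<in> H\<close> by auto
    then show False using not_differentiable_at_breakpoint[of m] diff \<open>t \<in> H\<close> m by auto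
  qed
  obtain t0 where t0: "t0 \<in> H" using H(2) by auto
  have "t0 \<in> {Q 1..Q N}" using H(3) t0 interior_subset by blast
  then obtain m where m: "m \<in> {1..<N}" "t0 \<in> {Q m<..<Q (Suc m)}"
    using open_segment_containing no_breakpoint[OF t0] by blast
  have "Q m \<notin> H" "Q (Suc m) \<notin> H"
    using no_breakpoint[of "Q m"] no_breakpoint[of "Q (Suc m)"] m(1) by auto
  have between: "x \<in> H" if "s \<in> H" "t \<in> H" "s \<le> x" "x \<le> t" for s t x
    using H(1) that unfolding is_interval_1 by blast
  have "H \<subseteq> {Q m<..<Q (Suc m)}"
  proof (intro subsetI)
    fix t assume "t \<in> H"
    then have "\<not> t \<le> Q m" "\<not> Q (Suc m) \<le> t"
      using between[OF \<open>t \<in> H\<close> t0, of "Q m"] between[OF t0 \<open>t \<in> H\<close>, of "Q (Suc m)"]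
        \<open>Q m \<notin> H\<close> \<open>Q (Suc m) \<notin> H\<close> m(2) by auto
    then show "t \<in> {Q m<..<Q (Suc m)}" by simp
  qed
  then show thesis using that m(1) by blast
qed

lemma gen_system_G2:
  "\<forall>H. is_interval H \<and> open H \<and> H \<noteq> {} \<and> H \<subseteq> {Q 1..Q N} \<and>
       (\<forall>t\<in>H. \<forall>j\<in>{1..n}. (\<lambda>t. P t j) differentiable (at t)) \<longrightarrow>
     (\<exists>r1 r2. 1 \<le> r1 \<and> r1 \<le> r2 \<and> r2 \<le> n \<and>
        (\<forall>t\<in>H. \<forall>j\<in>{r1..r2}. P t j = P t r1 \<and>
            ((\<lambda>t. P t j) has_real_derivative 1 / real (r2 - r1 + 1)) (at t)) \<and>
        (\<forall>j\<in>{1..n} - {r1..r2}. \<forall>t\<in>H. \<forall>u\<in>H. P t j = P u j))"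
proof (intro allI impI)
  fix H :: "real set"
  assume H: "is_interval H \<and> open H \<and> H \<noteq> {} \<and> H \<subseteq> {Q 1..Q N} \<and>
       (\<forall>t\<in>H. \<forall>j\<in>{1..n}. (\<lambda>t. P t j) differentiable (at t))"
  then have "H \<subseteq> interior {Q 1..Q N}" by (intro interior_maximal) auto
  then obtain m where m: "m \<in> {1..<N}" and Hm: "H \<subseteq> {Q m<..<Q (Suc m)}"
    using differentiable_interval_in_open_segment H by blast
  have bounds: "1 \<le> lo m" "lo m \<le> hi m" "hi m \<le> n" using block_bounds[OF m] by auto
  have seg: "t \<in> {Q m..Q (Suc m)}" if "t \<in> H" for t using Hm that by auto
  show "\<exists>r1 r2. 1 \<le> r1 \<and> r1 \<le> r2 \<and> r2 \<le> n \<and>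
        (\<forall>t\<in>H. \<forall>j\<in>{r1..r2}. P t j = P t r1 \<and>
            ((\<lambda>t. P t j) has_real_derivative 1 / real (r2 - r1 + 1)) (at t)) \<and>
        (\<forall>j\<in>{1..n} - {r1..r2}. \<forall>t\<in>H. \<forall>u\<in>H. P t j = P u j)"
  proof (intro exI conjI ballI)
    fix t j assume t: "t \<in> H" and j: "j \<in> {lo m..hi m}"
    have jn: "j \<in> {1..n}" "lo m \<in> {1..n}" using j bounds by auto
    show "P t j = P t (lo m)"
      using affine_on_segment[OF m seg[OF t] jn(1)] affine_on_segment[OF m seg[OF t] jn(2)]
        block_level[OF m j] j bounds by (simp add: block_slope_def)
    show "((\<lambda>t. P t j) has_real_derivative 1 / real (hi m - lo m + 1)) (at t)"
      using P_has_derivative_open_segment[OF m _ jn(1)] Hm t j by (auto simp: block_slope_def)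
  next
    fix j t u assume j: "j \<in> {1..n} - {lo m..hi m}" and t: "t \<in> H" and u: "u \<in> H"
    then show "P t j = P u j"
      using affine_on_segment[OF m seg[OF t]] affine_on_segment[OF m seg[OF u]]
      by (auto simp: block_slope_def)
  qed (use bounds in auto)
qed

lemma gen_system_G3:
  "\<forall>q\<in>interior {Q 1..Q N}. q \<in> nondiff_set n {Q 1..Q N} P \<longrightarrow>
     (\<forall>r1 r2 s1 s2. 1 \<le> r1 \<and> r1 \<le> r2 \<and> r2 \<le> n \<and> 1 \<le> s1 \<and> s1 \<le> s2 \<and> s2 \<le> n \<and>
        (\<forall>j\<in>{r1..r2}. ((\<lambda>t. P t j) has_real_derivative 1 / real (r2 - r1 + 1)) (at q within {..q})) \<and>
        (\<forall>j\<in>{s1..s2}. ((\<lambda>t. P t j) has_real_derivative 1 / real (s2 - s1 + 1)) (at q within {q..})) \<and>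
        r1 < s2 \<longrightarrow> (\<forall>j\<in>{r1..s2}. P q j = P q r1))"
proof (intro ballI impI allI)
  fix q r1 r2 s1 s2 j
  assume q: "q \<in> interior {Q 1..Q N}" "q \<in> nondiff_set n {Q 1..Q N} P"
  assume A: "1 \<le> r1 \<and> r1 \<le> r2 \<and> r2 \<le> n \<and> 1 \<le> s1 \<and> s1 \<le> s2 \<and> s2 \<le> n \<and>
     (\<forall>j\<in>{r1..r2}. ((\<lambda>t. P t j) has_real_derivative 1 / real (r2 - r1 + 1)) (at q within {..q})) \<and>
     (\<forall>j\<in>{s1..s2}. ((\<lambda>t. P t j) has_real_derivative 1 / real (s2 - s1 + 1)) (at q within {q..})) \<and>
     r1 < s2"
  assume j: "j \<in> {r1..s2}"
  obtain m where m: "m \<in> {1..N}" "q = Q m" using q(2) nondiff_set_eq_breakpoints by auto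
  then have m2: "m \<in> {2..<N}" using q(1) by (cases "m = 1 \<or> m = N") auto
  have left: "m - 1 \<in> {1..<N}" "Suc (m - 1) = m" and right: "m \<in> {1..<N}" using m2 by auto
  have r1: "r1 \<in> {1..n}" and s2: "s2 \<in> {1..n}" using A by auto
  have "((\<lambda>t. P t r1) has_real_derivative 1 / real (r2 - r1 + 1)) (at q within {Q (m - 1)..Q m})"
    by (rule has_field_derivative_subset[of _ _ _ "{..q}"]) (use A m(2) in auto)
  then have "1 / real (r2 - r1 + 1) = block_slope (lo (m - 1)) (hi (m - 1)) r1"
    using segment_slope_unique[OF left(1) _ r1, of q] Q_less_Suc[OF left(1)] left(2) m(2) by auto
  then have "lo (m - 1) \<le> r1" using block_slope_eq_0_iff[of "lo (m - 1)" "hi (m - 1)" r1] by auto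
  moreover have "((\<lambda>t. P t s2) has_real_derivative 1 / real (s2 - s1 + 1)) (at q within {Q m..Q (Suc m)})"
    by (rule has_field_derivative_subset[of _ _ _ "{q..}"]) (use A m(2) in auto)
  then have "1 / real (s2 - s1 + 1) = block_slope (lo m) (hi m) s2"
    using segment_slope_unique[OF right _ s2, of q] Q_less_Suc[OF right] m(2) by auto
  then have "s2 \<le> hi m" using block_slope_eq_0_iff[of "lo m" "hi m" s2] by auto
  ultimately show "P q j = P q r1"
    using junction_level[OF m2, of j] junction_level[OF m2, of r1] j A m(2) by auto
qed

lemma cont_piecewise_linear:
  assumes "\<forall>j\<in>{1..n}. continuous_on {Q 1..Q N} (\<lambda>q. P q j)"
  shows "cont_piecewise_linear n {Q 1..Q N} P"
  unfolding cont_piecewise_linear_def nondiff_set_eq_breakpoints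
proof (intro conjI ballI)
  fix x assume "x \<in> {Q 1..Q N}"
  obtain d where "d > 0" "\<forall>y\<in>Q ` {1..N}. y \<noteq> x \<longrightarrow> d \<le> dist x y"
    using finite_set_avoid[of "Q ` {1..N}" x] by auto
  then show "\<exists>e>0. \<forall>y\<in>Q ` {1..N}. dist y x < e \<longrightarrow> y = x"
    by (auto simp: dist_commute intro!: exI[of _ d])
next
  fix x assume "x \<in> {Q 1..Q N} - Q ` {1..N}"
  then obtain m where m: "m \<in> {1..<N}" "x \<in> {Q m<..<Q (Suc m)}"
    using open_segment_containing by blast
  define e where "e = min (x - Q m) (Q (Suc m) - x)"
  have deriv_segment: "deriv (\<lambda>t. P t j) y = block_slope (lo m) (hi m) j"
    if "y \<in> {Q m<..<Q (Suc m)}" "j \<in> {1..n}" for y j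
    using P_has_derivative_open_segment[OF m(1) that] DERIV_imp_deriv by blast
  show "\<exists>e>0. \<forall>y\<in>{Q 1..Q N} - Q ` {1..N}. dist y x < e \<longrightarrow>
     (\<forall>j\<in>{1..n}. deriv (\<lambda>t. P t j) y = deriv (\<lambda>t. P t j) x)"
  proof (intro exI conjI ballI impI)
    fix y j assume "y \<in> {Q 1..Q N} - Q ` {1..N}" "dist y x < e" "j \<in> {1..n}"
    moreover have "y \<in> {Q m<..<Q (Suc m)}"
      using \<open>dist y x < e\<close> m(2) unfolding e_def dist_real_def by auto
    ultimately show "deriv (\<lambda>t. P t j) y = deriv (\<lambda>t. P t j) x"
      using deriv_segment m(2) by simp
  qed (use m(2) e_def in auto)
qed (use assms in auto)

lemma gen_system_if_G1:
  assumes cont: "\<forall>j\<in>{1..n}. continuous_on {Q 1..Q N} (\<lambda>q. P q j)"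
    and nonneg: "0 \<le> Q 1"
    and G1: "\<forall>q\<in>{Q 1..Q N}. 0 \<le> P q 1 \<and> (\<forall>j\<in>{1..<n}. P q j \<le> P q (Suc j)) \<and>
      (\<Sum>j=1..n. P q j) = q"
  shows "gen_system n {Q 1..Q N} P"
proof -
  have "Q 1 < Q N" using Q_strict_mono[of 1 N] N_ge_2 by simp
  then have "interior {Q 1..Q N} \<noteq> {}" by simp
  moreover have "{Q 1..Q N} \<subseteq> {0..}" using nonneg by auto
  ultimately show ?thesis
    unfolding gen_system_def
    by (intro conjI is_interval_cc cont_piecewise_linear[OF cont] G1 gen_system_G2 gen_system_G3)
qed

end

section \<open>Partial sums of nondecreasing points\<close>

lemma mono_on_atLeastAtMost_SucI:
  fixes p :: "nat \<Rightarrow> 'a::order"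
  assumes "\<And>k. k \<in> {m..<n} \<Longrightarrow> p k \<le> p (Suc k)"
  shows "mono_on {m..n} p"
proof (rule mono_onI)
  fix r s assume rs: "r \<in> {m..n}" "s \<in> {m..n}" "r \<le> s"
  show "p r \<le> p s"
    by (rule lift_Suc_mono_le_ivl[where N="{m..<n}"]) (use assms rs in auto)
qed

definition closed_simplex :: "nat \<Rightarrow> (nat \<Rightarrow> real) \<Rightarrow> bool" where
  "closed_simplex n a \<longleftrightarrow> 0 \<le> a 1 \<and> mono_on {1..n} a \<and> (\<Sum>i=1..n. a i) = 1"

lemma closed_simplex_if_open_simplex: "open_simplex n a \<Longrightarrow> closed_simplex n a"
  unfolding open_simplex_def closed_simplex_def
  by (auto intro!: mono_on_atLeastAtMost_SucI less_imp_le)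

lemma closed_simplex_nonneg:
  assumes "closed_simplex n a" "k \<in> {1..n}"
  shows "0 \<le> a k"
  using assms mono_onD[of "{1..n}" a 1 k] unfolding closed_simplex_def by auto

lemma psi_split:
  assumes "i \<le> j"
  shows "psi j p = psi i p + (\<Sum>k=Suc i..j. p k)"
proof -
  have "{1..j} = {1..i} \<union> {Suc i..j}" "{1..i} \<inter> {Suc i..j} = {}" using assms by auto
  then show ?thesis unfolding psi_def by (simp add: sum.union_disjoint)
qed

lemma psi_mean_mono:
  assumes p: "mono_on {1..n} p" and "1 \<le> j" "j \<le> i" "i \<le> n"
  shows "real i * psi j p \<le> real j * psi i p"
proof -
  have head: "psi j p \<le> real j * p j"
    using sum_bounded_above[of "{1..j}" p "p j"] mono_onD[OF p] assms unfolding psi_def by auto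
  have tail: "real (i - j) * p j \<le> (\<Sum>k=Suc j..i. p k)"
    using sum_bounded_below[of "{Suc j..i}" "p j" p] mono_onD[OF p] assms by auto
  have "real i * psi j p = real j * psi j p + real (i - j) * psi j p"
    using assms by (simp add: of_nat_diff algebra_simps)
  also have "\<dots> \<le> real j * psi j p + real j * (real (i - j) * p j)"
    using mult_left_mono[OF head, of "real (i - j)"] by (simp add: algebra_simps)
  also have "\<dots> \<le> real j * psi j p + real j * (\<Sum>k=Suc j..i. p k)"
    using tail by (simp add: mult_left_mono)
  also have "\<dots> = real j * psi i p"
    using psi_split[OF \<open>j \<le> i\<close>, of p] by (simp add: algebra_simps)
  finally show ?thesis .
qed

definition flat_top :: "(nat \<Rightarrow> real) \<Rightarrow> nat \<Rightarrow> real \<Rightarrow> nat \<Rightarrow> real" where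
  "flat_top a i x = (\<lambda>k. if k \<le> i then a k else x)"

definition flat_bottom :: "(nat \<Rightarrow> real) \<Rightarrow> nat \<Rightarrow> real \<Rightarrow> nat \<Rightarrow> real" where
  "flat_bottom a i y = (\<lambda>k. if k \<le> i then y else a k)"

lemma mono_on_flat_top:
  assumes a: "mono_on {1..n} a" and "1 \<le> i" "a i \<le> x"
  shows "mono_on {1..n} (flat_top a i x)"
proof (rule mono_onI)
  fix r s assume "r \<in> {1..n}" "s \<in> {1..n}" "r \<le> s"
  then show "flat_top a i x r \<le> flat_top a i x s"
    using mono_onD[OF a, of r s] mono_onD[OF a, of r i] assms(2,3)
    by (auto simp: flat_top_def)
qed

lemma mono_on_flat_bottom:
  assumes a: "mono_on {1..n} a" and "i < n" "y \<le> a (Suc i)"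
  shows "mono_on {1..n} (flat_bottom a i y)"
proof (rule mono_onI)
  fix r s assume "r \<in> {1..n}" "s \<in> {1..n}" "r \<le> s"
  then show "flat_bottom a i y r \<le> flat_bottom a i y s"
    using mono_onD[OF a, of r s] mono_onD[OF a, of "Suc i" s] assms(2,3)
    by (auto simp: flat_bottom_def)
qed

lemma psi_flat_top_le: "j \<le> i \<Longrightarrow> psi j (flat_top a i x) = psi j a"
  unfolding psi_def flat_top_def by (intro sum.cong) auto

lemma psi_flat_top_ge: "i \<le> j \<Longrightarrow> psi j (flat_top a i x) = psi i a + real (j - i) * x"
  using psi_split[of i j "flat_top a i x"] psi_flat_top_le[of i i a x] by (simp add: flat_top_def)

lemma psi_flat_bottom_le: "j \<le> i \<Longrightarrow> psi j (flat_bottom a i y) = real j * y"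
  unfolding psi_def flat_bottom_def by simp

lemma psi_flat_bottom_ge:
  "i \<le> j \<Longrightarrow> psi j (flat_bottom a i y) = real i * y + (\<Sum>k=Suc i..j. a k)"
  using psi_split[of i j "flat_bottom a i y"] psi_flat_bottom_le[of i i a y]
  by (simp add: flat_bottom_def)

text \<open>The heart of the infimum bound: lowering the top of a to a common level between a_i and
  a_(i+1) does not decrease the normalized partial sums; neither does raising the bottom.\<close>

lemma psi_ratio_flat_top:
  assumes a: "closed_simplex n a" and i: "i \<in> {1..<n}" and x: "a i \<le> x" "x \<le> a (Suc i)"
    and j: "j \<in> {1..<n}"
  shows "psi j a * psi n (flat_top a i x) \<le> psi j (flat_top a i x)"
proof -
  have mono: "mono_on {1..n} a" and sum: "psi n a = 1"
    using a unfolding closed_simplex_def psi_def by auto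
  have nonneg: "\<And>k. k \<in> {1..n} \<Longrightarrow> 0 \<le> a k" using closed_simplex_nonneg[OF a] .
  have x0: "0 \<le> x" using nonneg[of i] x i by auto
  show ?thesis
  proof (cases "j \<le> i")
    case True
    have "x \<le> a k" if "k \<in> {Suc i..n}" for k
      using mono_onD[OF mono, of "Suc i" k] that x(2) i by auto
    then have "psi n (flat_top a i x) \<le> psi n a"
      unfolding psi_def flat_top_def by (intro sum_mono) auto
    moreover have "0 \<le> psi j a" unfolding psi_def using nonneg j by (intro sum_nonneg) auto
    ultimately show ?thesis
      using mult_left_mono[of "psi n (flat_top a i x)" 1 "psi j a"] sum True
      by (simp add: psi_flat_top_le)
  next
    case False
    define S A T m u v where "S = psi i a" and "A = (\<Sum>k=Suc i..j. a k)"
      and "T = (\<Sum>k=Suc j..n. a k)" and "m = a (Suc j)" and "u = real (j - i)" and "v = real (n - j)"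
    have S0: "0 \<le> S" unfolding S_def psi_def using nonneg i by (intro sum_nonneg) auto
    have "0 \<le> u" "0 \<le> v" unfolding u_def v_def by auto
    have psa: "psi j a = S + A" unfolding S_def A_def using False by (simp add: psi_split)
    have total: "S + A + T = 1"
      using psi_split[of j n a] sum j unfolding T_def psa by simp
    have psp: "psi j (flat_top a i x) = S + u * x" using False by (simp add: psi_flat_top_ge S_def u_def)
    have mass: "psi n (flat_top a i x) = S + (u + v) * x"
      using False j i by (simp add: psi_flat_top_ge S_def u_def v_def of_nat_diff algebra_simps)
    have hA: "A \<le> u * m"
      using sum_bounded_above[of "{Suc i..j}" a m] mono_onD[OF mono] j False
      unfolding A_def u_def m_def by auto
    have hT: "v * m \<le> T"
      using sum_bounded_below[of "{Suc j..n}" m a] mono_onD[OF mono] j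
      unfolding T_def v_def m_def by auto
    have hx: "x \<le> m"
      using x(2) mono_onD[OF mono, of "Suc i" "Suc j"] False j unfolding m_def by auto
    have "psi j a * psi n (flat_top a i x) = (S + A) * (S + u * x) + (S + A) * (v * x)"
      unfolding psa mass by (simp add: algebra_simps)
    also have "\<dots> \<le> (S + A) * (S + u * x) + (S + u * m) * (v * x)"
      using hA \<open>0 \<le> u\<close> \<open>0 \<le> v\<close> x0 by (intro add_left_mono mult_right_mono) auto
    also have "\<dots> \<le> (S + A) * (S + u * x) + v * m * (S + u * x)"
    proof -
      have "S * (v * x) \<le> S * (v * m)" using hx S0 \<open>0 \<le> v\<close> by (intro mult_left_mono) auto
      then show ?thesis by (simp add: algebra_simps)
    qed
    also have "\<dots> \<le> (S + A) * (S + u * x) + T * (S + u * x)"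
      using hT S0 \<open>0 \<le> u\<close> x0 by (intro add_left_mono mult_right_mono) auto
    also have "\<dots> = (S + A + T) * (S + u * x)" by (simp add: algebra_simps)
    also have "\<dots> = psi j (flat_top a i x)" using total psp by simp
    finally show ?thesis .
  qed
qed

lemma psi_ratio_flat_bottom:
  assumes a: "closed_simplex n a" and i: "i \<in> {1..<n}" and y: "a i \<le> y" "y \<le> a (Suc i)"
    and j: "j \<in> {1..<n}"
  shows "psi j a * psi n (flat_bottom a i y) \<le> psi j (flat_bottom a i y)"
proof -
  have mono: "mono_on {1..n} a" and sum: "psi n a = 1"
    using a unfolding closed_simplex_def psi_def by auto
  have nonneg: "\<And>k. k \<in> {1..n} \<Longrightarrow> 0 \<le> a k" using closed_simplex_nonneg[OF a] .
  define S T where "S = psi i a" and "T = (\<Sum>k=Suc i..n. a k)"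
  have total: "S + T = 1" using psi_split[of i n a] sum i unfolding S_def T_def by simp
  have T0: "0 \<le> T" unfolding T_def using nonneg by (intro sum_nonneg) auto
  have mass: "psi n (flat_bottom a i y) = real i * y + T"
    using i by (simp add: psi_flat_bottom_ge T_def)
  have y0: "0 \<le> y" using nonneg[of i] y i by auto
  have below_y: "a k \<le> y" if "k \<in> {1..i}" for k
    using mono_onD[OF mono, of k i] that i y(1) by auto
  have hS: "S \<le> real i * y"
    using sum_bounded_above[of "{1..i}" a y] below_y unfolding S_def psi_def by auto
  show ?thesis
  proof (cases "i \<le> j")
    case True
    define D where "D = real i * y - S"
    have "0 \<le> (\<Sum>k=Suc j..n. a k)" using nonneg j by (intro sum_nonneg) auto
    then have "psi j a \<le> 1" using psi_split[of j n a] sum j by simp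
    then have "psi j a * D \<le> D" using hS D_def mult_right_mono[of "psi j a" 1 D] by simp
    moreover have "psi j a * psi n (flat_bottom a i y) = psi j a + psi j a * D"
    proof -
      have T: "T = 1 - S" using total by simp
      show ?thesis unfolding mass D_def T by (simp add: algebra_simps)
    qed
    ultimately have "psi j a * psi n (flat_bottom a i y) \<le> psi j a + D" by simp
    also have "\<dots> = psi j (flat_bottom a i y)"
      using True psi_split[of i j a] by (simp add: psi_flat_bottom_ge D_def S_def)
    finally show ?thesis .
  next
    case False
    have "real i * psi j a \<le> real j * S"
      using psi_mean_mono[OF mono, of j i] False i j unfolding S_def by auto
    then have h1: "real i * psi j a * y \<le> real j * S * y" using y0 by (intro mult_right_mono)
    have "psi j a \<le> real j * y"
      using sum_bounded_above[of "{1..j}" a y] below_y False unfolding psi_def by auto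
    then have h2: "psi j a * T \<le> real j * y * T" using T0 by (intro mult_right_mono)
    have "psi j a * psi n (flat_bottom a i y) = real i * psi j a * y + psi j a * T"
      unfolding mass by (simp add: algebra_simps)
    also have "\<dots> \<le> real j * y * (S + T)" using h1 h2 by (simp add: algebra_simps)
    also have "\<dots> = psi j (flat_bottom a i y)" using total False by (simp add: psi_flat_bottom_le)
    finally show ?thesis .
  qed
qed

section \<open>The extremal system\<close>

locale extremal_system =
  fixes n :: nat and a qq :: "nat \<Rightarrow> real" and P :: "real \<Rightarrow> nat \<Rightarrow> real"
  assumes n_ge_2: "n \<ge> 2"
    and simplex: "open_simplex n a"
    and qq_head: "\<forall>i\<in>{1..n}. qq i = (\<Sum>k=1..i. a k) + real (n - i) * a i"
    and qq_tail: "\<forall>i\<in>{1..n}. qq (n - 1 + i) = real (i - 1) * a i + (\<Sum>k=i..n. a k)"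
    and P_head: "\<forall>i\<in>{1..n-1}. \<forall>q\<in>{qq i .. qq (i + 1)}.
      (\<forall>k\<in>{1..i}. P q k = a k) \<and> (\<forall>k\<in>{i+1..n}. P q k = a i + (q - qq i) / real (n - i))"
    and P_tail: "\<forall>i\<in>{1..n-1}. \<forall>q\<in>{qq (n - 1 + i) .. qq (n + i)}.
      (\<forall>k\<in>{1..i}. P q k = a i + (q - qq (n - 1 + i)) / real i) \<and> (\<forall>k\<in>{i+1..n}. P q k = a k)"
begin

lemma a_closed_simplex: "closed_simplex n a"
  using closed_simplex_if_open_simplex[OF simplex] .

lemma a_less_Suc: "i \<in> {1..<n} \<Longrightarrow> a i < a (Suc i)"
  using simplex unfolding open_simplex_def by auto

lemma a_1_pos: "0 < a 1"
  using simplex unfolding open_simplex_def by auto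

lemma qq_psi: "i \<in> {1..n} \<Longrightarrow> qq i = psi i a + real (n - i) * a i"
  using qq_head unfolding psi_def by blast

lemma qq_tail_psi:
  assumes "i \<in> {1..n}"
  shows "qq (n - 1 + i) = real i * a i + (\<Sum>k=Suc i..n. a k)"
proof -
  have "qq (n - 1 + i) = real (i - 1) * a i + (\<Sum>k=i..n. a k)" using qq_tail assms by blast
  moreover have "(\<Sum>k=i..n. a k) = a i + (\<Sum>k=Suc i..n. a k)"
    using assms by (intro sum.atLeast_Suc_atMost) auto
  moreover have "real (i - 1) = real i - 1" using assms by (simp add: of_nat_diff)
  ultimately show ?thesis by (simp add: algebra_simps)
qed

lemma qq_first: "qq 1 = real n * a 1"
  using qq_psi[of 1] n_ge_2 by (simp add: psi_def of_nat_diff algebra_simps)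

lemma qq_at_n: "qq n = 1"
  using qq_psi[of n] n_ge_2 a_closed_simplex unfolding closed_simplex_def psi_def by simp

lemma qq_last: "qq (2 * n - 1) = real n * a n"
  using qq_tail_psi[of n] n_ge_2 by (simp add: mult_2)

lemma qq_head_step:
  assumes "i \<in> {1..<n}"
  shows "qq (Suc i) - qq i = real (n - i) * (a (Suc i) - a i)"
proof -
  have "real (n - i) = real (n - Suc i) + 1" using assms by (simp add: of_nat_diff)
  then show ?thesis using qq_psi[of i] qq_psi[of "Suc i"] assms by (simp add: psi_def algebra_simps)
qed

lemma qq_tail_step:
  assumes "i \<in> {1..<n}"
  shows "qq (n + i) - qq (n - 1 + i) = real i * (a (Suc i) - a i)"
proof -
  have "n + i = n - 1 + Suc i" using n_ge_2 by simp
  then show ?thesis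
    using qq_tail_psi[of i] qq_tail_psi[of "Suc i"] assms
    by (simp add: sum.atLeast_Suc_atMost algebra_simps)
qed

lemma segment_cases:
  assumes "m \<in> {1..<2 * n - 1}"
  obtains (head) "m \<in> {1..<n}"
    | (tail) i where "i \<in> {1..<n}" "m = n - 1 + i" "Suc m = n + i"
proof (cases "m < n")
  case True
  with assms have "m \<in> {1..<n}" by auto
  then show thesis by (rule head)
next
  case False
  define i where "i = m + 1 - n"
  have "i \<in> {1..<n}" "m = n - 1 + i" "Suc m = n + i"
    using False assms n_ge_2 unfolding i_def by auto
  then show thesis by (rule tail)
qed

lemma qq_less_Suc:
  assumes "m \<in> {1..<2 * n - 1}"
  shows "qq m < qq (Suc m)"
  using assms
proof (cases rule: segment_cases)
  case head
  have "0 < real (n - m) * (a (Suc m) - a m)"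
    using head a_less_Suc[OF head] by (intro mult_pos_pos) auto
  then show ?thesis using qq_head_step[OF head] by linarith
next
  case (tail i)
  have "0 < real i * (a (Suc i) - a i)"
    using tail(1) a_less_Suc[OF tail(1)] by (intro mult_pos_pos) auto
  then show ?thesis using qq_tail_step[OF tail(1)] tail(2,3) by simp
qed

lemma P_head_segment:
  assumes "i \<in> {1..<n}" "q \<in> {qq i..qq (Suc i)}" "k \<in> {1..n}"
  shows "P q k = flat_top a i (a i + (q - qq i) / real (n - i)) k"
proof -
  have "(\<forall>k\<in>{1..i}. P q k = a k) \<and> (\<forall>k\<in>{i+1..n}. P q k = a i + (q - qq i) / real (n - i))"
    using bspec[OF P_head, of i] assms(1,2) by auto
  then show ?thesis using assms(3) by (auto simp: flat_top_def)
qed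

lemma P_tail_segment:
  assumes "i \<in> {1..<n}" "q \<in> {qq (n - 1 + i)..qq (n + i)}" "k \<in> {1..n}"
  shows "P q k = flat_bottom a i (a i + (q - qq (n - 1 + i)) / real i) k"
proof -
  have "(\<forall>k\<in>{1..i}. P q k = a i + (q - qq (n - 1 + i)) / real i) \<and> (\<forall>k\<in>{i+1..n}. P q k = a k)"
    using bspec[OF P_tail, of i] assms(1,2) by auto
  then show ?thesis using assms(3) by (auto simp: flat_bottom_def)
qed

lemma P_head_breakpoint:
  assumes "i \<in> {1..<n}" "k \<in> {1..n}"
  shows "P (qq i) k = flat_top a i (a i) k"
proof -
  have "i \<in> {1..<2 * n - 1}" using assms(1) by auto
  then have "qq i \<le> qq (Suc i)" using qq_less_Suc by (simp add: less_imp_le)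
  then show ?thesis using P_head_segment[OF assms(1) _ assms(2), of "qq i"] by simp
qed

lemma P_tail_breakpoint:
  assumes "i \<in> {1..<n}" "k \<in> {1..n}"
  shows "P (qq (n - 1 + i)) k = flat_bottom a i (a i) k"
proof -
  have "n - 1 + i \<in> {1..<2 * n - 1}" "Suc (n - 1 + i) = n + i" using assms(1) n_ge_2 by auto
  then have "qq (n - 1 + i) \<le> qq (n + i)" using qq_less_Suc[of "n - 1 + i"] by simp
  then show ?thesis using P_tail_segment[OF assms(1) _ assms(2), of "qq (n - 1 + i)"] by simp
qed

definition seg_lo :: "nat \<Rightarrow> nat" where
  "seg_lo m = (if m < n then Suc m else 1)"

definition seg_hi :: "nat \<Rightarrow> nat" where
  "seg_hi m = (if m < n then n else m + 1 - n)"

sublocale block_linear_path n "2 * n - 1" qq P seg_lo seg_hi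
proof
  show "2 \<le> 2 * n - 1" using n_ge_2 by simp
  show "qq m < qq (Suc m)" if "m \<in> {1..<2 * n - 1}" for m using qq_less_Suc[OF that] .
  show "1 \<le> seg_lo m \<and> seg_lo m \<le> seg_hi m \<and> seg_hi m \<le> n" if "m \<in> {1..<2 * n - 1}" for m
    using that by (auto simp: seg_lo_def seg_hi_def)
  show "(seg_lo (m - 1), seg_hi (m - 1)) \<noteq> (seg_lo m, seg_hi m)" if "m \<in> {2..<2 * n - 1}" for m
    using that n_ge_2 by (auto simp: seg_lo_def seg_hi_def)
next
  fix m q k assume m: "m \<in> {1..<2 * n - 1}" and q: "q \<in> {qq m..qq (Suc m)}" and k: "k \<in> {1..n}"
  from m show "P q k = P (qq m) k + block_slope (seg_lo m) (seg_hi m) k * (q - qq m)"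
  proof (cases rule: segment_cases)
    case head
    then show ?thesis
      using P_head_segment[OF head q k] P_head_breakpoint[OF head k] k
      by (auto simp: flat_top_def block_slope_def seg_lo_def seg_hi_def Suc_diff_Suc)
  next
    case (tail i)
    then show ?thesis
      using P_tail_segment[OF tail(1) _ k, of q] P_tail_breakpoint[OF tail(1) k] q k
      by (auto simp: flat_bottom_def block_slope_def seg_lo_def seg_hi_def)
  qed
next
  fix m k assume m: "m \<in> {1..<2 * n - 1}" and k: "k \<in> {seg_lo m..seg_hi m}"
  from m show "P (qq m) k = P (qq m) (seg_lo m)"
  proof (cases rule: segment_cases)
    case head
    then show ?thesis
      using P_head_breakpoint[OF head, of k] P_head_breakpoint[OF head, of "Suc m"] k
      by (auto simp: flat_top_def seg_lo_def seg_hi_def)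
  next
    case (tail i)
    then show ?thesis
      using P_tail_breakpoint[OF tail(1), of k] P_tail_breakpoint[OF tail(1), of 1] k
      by (auto simp: flat_bottom_def seg_lo_def seg_hi_def)
  qed
next
  fix m k assume m: "m \<in> {2..<2 * n - 1}" and k: "k \<in> {seg_lo (m - 1)..seg_hi m}"
  then have "m \<in> {1..<2 * n - 1}" by auto
  then show "P (qq m) k = P (qq m) (seg_lo (m - 1))"
  proof (cases rule: segment_cases)
    case head
    then show ?thesis
      using P_head_breakpoint[OF head, of k] P_head_breakpoint[OF head, of m] k m
      by (auto simp: flat_top_def seg_lo_def seg_hi_def)
  next
    case (tail i)
    have "1 \<le> i" using tail(1) by simp
    then have "\<not> m < n" using tail(2) by arith
    then have hi: "seg_hi m = i" using tail by (simp add: seg_hi_def)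
    show ?thesis
    proof (cases "i = 1")
      case True
      then have "seg_lo (m - 1) = n" using tail n_ge_2 by (simp add: seg_lo_def)
      then show ?thesis using k hi True n_ge_2 by auto
    next
      case False
      then have "\<not> m - 1 < n" using \<open>1 \<le> i\<close> tail(2) by arith
      then have "seg_lo (m - 1) = 1" by (simp add: seg_lo_def)
      moreover have "k \<in> {1..i}" using k hi calculation by simp
      ultimately show ?thesis
        using P_tail_breakpoint[OF tail(1)] tail(1) unfolding tail(2)[symmetric]
        by (auto simp: flat_bottom_def)
    qed
  qed
qed

lemma P_head_profile:
  assumes i: "i \<in> {1..<n}" and q: "q \<in> {qq i..qq (Suc i)}"
  obtains x where "a i \<le> x" "x \<le> a (Suc i)" "psi n (flat_top a i x) = q"
    "\<forall>k\<in>{1..n}. P q k = flat_top a i x k"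
proof -
  define r where "r = real (n - i)"
  define x where "x = a i + (q - qq i) / r"
  have r: "0 < r" using i unfolding r_def by simp
  have "(q - qq i) / r \<le> (qq (Suc i) - qq i) / r" using q r by (intro divide_right_mono) auto
  then have "x \<le> a (Suc i)" using qq_head_step[OF i] r unfolding x_def r_def by simp
  moreover have "a i \<le> x" using q r unfolding x_def by simp
  moreover have "psi n (flat_top a i x) = psi i a + r * a i + (q - qq i)"
    using i r by (simp add: psi_flat_top_ge x_def r_def distrib_left)
  then have "psi n (flat_top a i x) = q" using qq_psi[of i] i unfolding r_def by simp
  ultimately show thesis using that P_head_segment[OF i q] unfolding x_def r_def by blast
qed

lemma P_tail_profile:
  assumes i: "i \<in> {1..<n}" and q: "q \<in> {qq (n - 1 + i)..qq (n + i)}"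
  obtains y where "a i \<le> y" "y \<le> a (Suc i)" "psi n (flat_bottom a i y) = q"
    "\<forall>k\<in>{1..n}. P q k = flat_bottom a i y k"
proof -
  define y where "y = a i + (q - qq (n - 1 + i)) / real i"
  have r: "0 < real i" using i by simp
  have "(q - qq (n - 1 + i)) / real i \<le> (qq (n + i) - qq (n - 1 + i)) / real i"
    using q r by (intro divide_right_mono) auto
  then have "y \<le> a (Suc i)" using qq_tail_step[OF i] r unfolding y_def by simp
  moreover have "a i \<le> y" using q r unfolding y_def by simp
  moreover have "psi n (flat_bottom a i y) = real i * a i + (q - qq (n - 1 + i)) + (\<Sum>k=Suc i..n. a k)"
    using i r by (simp add: psi_flat_bottom_ge y_def distrib_left)
  then have "psi n (flat_bottom a i y) = q" using qq_tail_psi[of i] i by simp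
  ultimately show thesis using that P_tail_segment[OF i q] unfolding y_def by blast
qed

lemma P_profile:
  assumes "q \<in> {qq 1..qq (2 * n - 1)}"
  obtains p where "mono_on {1..n} p" "0 \<le> p 1" "psi n p = q" "\<forall>k\<in>{1..n}. P q k = p k"
    "\<forall>j\<in>{1..<n}. psi j a * q \<le> psi j p"
proof -
  have mono: "mono_on {1..n} a" using a_closed_simplex unfolding closed_simplex_def by simp
  have nonneg: "\<And>k. k \<in> {1..n} \<Longrightarrow> 0 \<le> a k" using closed_simplex_nonneg[OF a_closed_simplex] .
  obtain m where m: "m \<in> {1..<2 * n - 1}" "q \<in> {qq m..qq (Suc m)}"
    using segment_containing[OF assms] .
  from m(1) show thesis
  proof (cases rule: segment_cases)
    case head
    obtain x where x: "a m \<le> x" "x \<le> a (Suc m)" "psi n (flat_top a m x) = q"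
      "\<forall>k\<in>{1..n}. P q k = flat_top a m x k"
      using P_head_profile[OF head m(2)] .
    show thesis
    proof (rule that[OF mono_on_flat_top[OF mono _ x(1)] _ x(3,4)])
      show "\<forall>j\<in>{1..<n}. psi j a * q \<le> psi j (flat_top a m x)"
        using psi_ratio_flat_top[OF a_closed_simplex head x(1,2)] x(3) by simp
    qed (use head nonneg[of 1] n_ge_2 in \<open>auto simp: flat_top_def\<close>)
  next
    case (tail i)
    obtain y where y: "a i \<le> y" "y \<le> a (Suc i)" "psi n (flat_bottom a i y) = q"
      "\<forall>k\<in>{1..n}. P q k = flat_bottom a i y k"
      using P_tail_profile[OF tail(1)] m(2) tail(2,3) by auto
    show thesis
    proof (rule that[OF mono_on_flat_bottom[OF mono _ y(2)] _ y(3,4)])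
      show "\<forall>j\<in>{1..<n}. psi j a * q \<le> psi j (flat_bottom a i y)"
        using psi_ratio_flat_bottom[OF a_closed_simplex tail(1) y(1,2)] y(3) by simp
    qed (use tail nonneg[of i] y(1) in \<open>auto simp: flat_bottom_def\<close>)
  qed
qed

lemma qq_interval_eq: "{qq 1..qq (2 * n - 1)} = {real n * a 1..real n * a n}"
  by (simp only: qq_first qq_last)

lemma positive_on_interval: "q \<in> {qq 1..qq (2 * n - 1)} \<Longrightarrow> 0 < q"
  using a_1_pos n_ge_2 qq_first by (auto intro: less_le_trans[of 0 "real n * a 1"])

lemma gen_system_G1:
  "\<forall>q\<in>{qq 1..qq (2 * n - 1)}.
     0 \<le> P q 1 \<and> (\<forall>j\<in>{1..<n}. P q j \<le> P q (Suc j)) \<and> (\<Sum>j=1..n. P q j) = q"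
proof
  fix q assume "q \<in> {qq 1..qq (2 * n - 1)}"
  then obtain p where p: "mono_on {1..n} p" "0 \<le> p 1" "psi n p = q" "\<forall>k\<in>{1..n}. P q k = p k"
    using P_profile by blast
  have "(\<Sum>j=1..n. P q j) = psi n p" unfolding psi_def using p(4) by (intro sum.cong) auto
  then show "0 \<le> P q 1 \<and> (\<forall>j\<in>{1..<n}. P q j \<le> P q (Suc j)) \<and> (\<Sum>j=1..n. P q j) = q"
    using p n_ge_2 mono_onD[OF p(1)] by auto
qed

lemma gen_system_on_interval:
  assumes "\<forall>j\<in>{1..n}. continuous_on {real n * a 1 .. real n * a n} (\<lambda>q. P q j)"
  shows "gen_system n {real n * a 1 .. real n * a n} P"
proof -
  have "0 \<le> qq 1" using a_1_pos unfolding qq_first by simp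
  with assms have "gen_system n {qq 1..qq (2 * n - 1)} P"
    unfolding qq_interval_eq[symmetric] by (intro gen_system_if_G1 gen_system_G1)
  then show ?thesis unfolding qq_interval_eq .
qed

lemma psi_ratio_bounds:
  assumes q: "q \<in> {qq 1..qq (2 * n - 1)}" and j: "j \<in> {1..<n}"
  shows "psi j a \<le> psi j (\<lambda>k. P q k / q)" "psi j (\<lambda>k. P q k / q) \<le> real j / real n"
proof -
  obtain p where p: "mono_on {1..n} p" "0 \<le> p 1" "psi n p = q" "\<forall>k\<in>{1..n}. P q k = p k"
    "\<forall>j\<in>{1..<n}. psi j a * q \<le> psi j p"
    by (rule P_profile[OF q])
  have q0: "0 < q" using positive_on_interval[OF q] .
  have ratio: "psi j (\<lambda>k. P q k / q) = psi j p / q"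
    unfolding psi_def sum_divide_distrib using p(4) j by (intro sum.cong) auto
  have "psi j a * q \<le> psi j p" using p(5) j by blast
  then show "psi j a \<le> psi j (\<lambda>k. P q k / q)"
    unfolding ratio using q0 by (simp add: pos_le_divide_eq)
  have n0: "0 < real n" using n_ge_2 by simp
  have "real n * psi j p \<le> real j * q" using psi_mean_mono[OF p(1), of j n] p(3) j by auto
  then have "(real n * psi j p) / (real n * q) \<le> (real j * q) / (real n * q)"
    using n0 q0 by (intro divide_right_mono) auto
  then show "psi j (\<lambda>k. P q k / q) \<le> real j / real n"
    unfolding ratio using n0 q0 by simp
qed

lemma Inf_psi_ratio:
  assumes "j \<in> {1..<n}"
  shows "Inf ((\<lambda>q. psi j (\<lambda>k. P q k / q)) ` {real n * a 1 .. real n * a n}) = psi j a"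
  unfolding qq_interval_eq[symmetric]
proof (rule cInf_eq_minimum)
  have "P (qq n) k = a k" if "k \<in> {1..n}" for k
    using P_tail_breakpoint[of 1 k] that n_ge_2 by (cases "k = 1") (auto simp: flat_bottom_def)
  then have "psi j a = psi j (\<lambda>k. P (qq n) k / qq n)"
    unfolding psi_def qq_at_n using assms by (intro sum.cong) auto
  moreover have "qq n \<in> {qq 1..qq (2 * n - 1)}"
    using Q_mono[of 1 n] Q_mono[of n "2 * n - 1"] n_ge_2 by auto
  ultimately show "psi j a \<in> (\<lambda>q. psi j (\<lambda>k. P q k / q)) ` {qq 1..qq (2 * n - 1)}"
    by (rule image_eqI)
qed (use psi_ratio_bounds(1)[OF _ assms] in blast)

lemma Sup_psi_ratio:
  assumes "j \<in> {1..<n}"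
  shows "Sup ((\<lambda>q. psi j (\<lambda>k. P q k / q)) ` {real n * a 1 .. real n * a n}) = real j / real n"
  unfolding qq_interval_eq[symmetric]
proof (rule cSup_eq_maximum)
  have "P (qq 1) k = a 1" if "k \<in> {1..n}" for k
    using P_head_breakpoint[of 1 k] that n_ge_2 by (cases "k = 1") (auto simp: flat_top_def)
  then have "real j / real n = psi j (\<lambda>k. P (qq 1) k / qq 1)"
    unfolding psi_def qq_first using assms a_1_pos by simp
  moreover have "qq 1 \<in> {qq 1..qq (2 * n - 1)}" using Q_mono[of 1 "2 * n - 1"] n_ge_2 by auto
  ultimately show "real j / real n \<in> (\<lambda>q. psi j (\<lambda>k. P q k / q)) ` {qq 1..qq (2 * n - 1)}"
    by (rule image_eqI)
qed (use psi_ratio_bounds(2)[OF _ assms] in blast)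

end

theorem mainTheorem8:
  fixes n :: nat and a :: "nat \<Rightarrow> real" and qq :: "nat \<Rightarrow> real"
    and P :: "real \<Rightarrow> nat \<Rightarrow> real"
  assumes "n \<ge> 2"
    and "open_simplex n a"
    and "\<forall>i\<in>{1..n}. qq i = (\<Sum>k=1..i. a k) + real (n - i) * a i"
    and "\<forall>i\<in>{1..n}. qq (n - 1 + i) = real (i - 1) * a i + (\<Sum>k=i..n. a k)"
    and "\<forall>j\<in>{1..n}. continuous_on {real n * a 1 .. real n * a n} (\<lambda>q. P q j)"
    and "\<forall>i\<in>{1..n-1}. \<forall>q\<in>{qq i .. qq (i + 1)}.
           (\<forall>k\<in>{1..i}. P q k = a k) \<and>
           (\<forall>k\<in>{i+1..n}. P q k = a i + (q - qq i) / real (n - i))"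
    and "\<forall>i\<in>{1..n-1}. \<forall>q\<in>{qq (n - 1 + i) .. qq (n + i)}.
           (\<forall>k\<in>{1..i}. P q k = a i + (q - qq (n - 1 + i)) / real i) \<and>
           (\<forall>k\<in>{i+1..n}. P q k = a k)"
  shows "gen_system n {real n * a 1 .. real n * a n} P \<and>
         (\<forall>j\<in>{1..n-1}.
            Inf ((\<lambda>q. psi j (\<lambda>k. P q k / q)) ` {real n * a 1 .. real n * a n}) = psi j a \<and>
            Sup ((\<lambda>q. psi j (\<lambda>k. P q k / q)) ` {real n * a 1 .. real n * a n}) = real j / real n)"
proof -
  interpret extremal_system n a qq P
    by unfold_locales (fact assms)+
  have "j \<in> {1..<n}" if "j \<in> {1..n-1}" for j using that n_ge_2 by auto
  then show ?thesis using gen_system_on_interval[OF assms(5)] Inf_psi_ratio Sup_psi_ratio by blast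
qed

end
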